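(* Let $q\in(0,1]$. Consider the parametric convex semi-infinite problem described in the context and let $((\bar c,\bar b),\bar x)\in\operatorname{gph}\mathcal{S}$. Then the following are equivalent: (i) $\mathcal{L}$ is $q$-order calm at $((f(\bar x)+\langle\bar c,\bar x\rangle,\bar b),\bar x)\in\operatorname{gph}\mathcal{L}$; (ii) $\liminf_{x\to\bar x,\ \bar f(x)\downarrow0}\bar f(x)^{q-1}d(0,\partial\bar f(x))>0$.
   Context: Setting: $T$ is a compact subset of a metric space $Z$ with $T\neq Z$; $f:\mathbb{R}^n\to\mathbb{R}$ and $g_t:\mathbb{R}^n\to\mathbb{R}$ ($t\in T$) are convex, with $(t,x)\mapsto g_t(x)$ continuous on $T\times\mathbb{R}^n$. $\mathcal{C}(T,\mathbb{R})$ is the space of continuous $b:T\to\mathbb{R}$, $t\mapsto b_t$, with $\|b\|_\infty=\max_t|b_t|$. For $(c,b)\in\mathbb{R}^n\times\mathcal{C}(T,\mathbb{R})$, $P(c,b)$: minimize $f(x)+\langle c,x\rangle$ subject to $g_t(x)\le b_t$, $t\in T$; $\mathcal{S}(c,b)$ is its optimal solution set. $\mathcal{L}:\mathbb{R}\times\mathcal{C}(T,\mathbb{R})\rightrightarrows\mathbb{R}^n$, $\mathcal{L}(\alpha,b)=\{x: f(x)+\langle\bar c,x\rangle\le\alpha,\ g_t(x)\le b_t,\ t\in T\}$, with $\mathbb{R}\times\mathcal{C}(T,\mathbb{R})$ normed by $\max\{|\alpha|,\|b\|_\infty\}$. $\bar f(x):=\sup\{f(x)-f(\bar x)+\langle\bar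 c,x-\bar x\rangle;\ g_t(x)-\bar b_t,\ t\in T\}$. $\partial$ is the convex subdifferential, $d(0,A)=\inf_{a\in A}\|a\|$ (Euclidean). The liminf over "$\bar f(x)\downarrow0$" is over $x$ with $\bar f(x)>0$. A set-valued $S:Y\rightrightarrows X$ between metric spaces is $q$-order calm at $(\bar y,\bar x)\in\operatorname{gph}S$ if there exist $\tau>0$ and neighbourhoods $U$ of $\bar x$, $V$ of $\bar y$ with $\tau\,d(x,S(\bar y))\le d(y,\bar y)^q$ for all $y\in V$, $x\in S(y)\cap U$. *)

theory Defs
  imports "HOL-Analysis.Analysis"
begin

definition supnorm :: "'z set \<Rightarrow> ('z \<Rightarrow> real) \<Rightarrow> real" where
  "supnorm T b = Sup (insert 0 ((\<lambda>t. \<bar>b t\<bar>) ` T))"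

definition param_space :: "'z::topological_space set \<Rightarrow> (real \<times> ('z \<Rightarrow> real)) set" where
  "param_space T = {(\<alpha>, b). continuous_on T b}"

definition param_dist :: "'z set \<Rightarrow> real \<times> ('z \<Rightarrow> real) \<Rightarrow> real \<times> ('z \<Rightarrow> real) \<Rightarrow> real" where
  "param_dist T y y' = max \<bar>fst y - fst y'\<bar> (supnorm T (\<lambda>t. snd y t - snd y' t))"

definition feasible :: "'z set \<Rightarrow> ('z \<Rightarrow> 'a \<Rightarrow> real) \<Rightarrow> ('z \<Rightarrow> real) \<Rightarrow> 'a set" where
  "feasible T g b = {x. \<forall>t\<in>T. g t x \<le> b t}"

definition optsol :: "'z set \<Rightarrow> ('a::real_inner \<Rightarrow> real) \<Rightarrow> ('z \<Rightarrow> 'a \<Rightarrow> real)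
    \<Rightarrow> 'a \<Rightarrow> ('z \<Rightarrow> real) \<Rightarrow> 'a set" where
  "optsol T f g c b = {x \<in> feasible T g b.
      \<forall>y\<in>feasible T g b. f x + inner c x \<le> f y + inner c y}"

definition levelmap :: "'z set \<Rightarrow> ('a::real_inner \<Rightarrow> real) \<Rightarrow> ('z \<Rightarrow> 'a \<Rightarrow> real)
    \<Rightarrow> 'a \<Rightarrow> real \<times> ('z \<Rightarrow> real) \<Rightarrow> 'a set" where
  "levelmap T f g c y = {x. f x + inner c x \<le> fst y \<and> (\<forall>t\<in>T. g t x \<le> snd y t)}"

definition q_order_calm :: "'y set \<Rightarrow> ('y \<Rightarrow> 'y \<Rightarrow> real) \<Rightarrow> ('y \<Rightarrow> 'x::metric_space set)
    \<Rightarrow> 'y \<Rightarrow> 'x \<Rightarrow> real \<Rightarrow> bool" where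
  "q_order_calm Y dY S ybar xbar q \<longleftrightarrow>
     (\<exists>\<tau>>0. \<exists>\<epsilon>>0. \<exists>\<delta>>0. \<forall>y\<in>Y. dY y ybar < \<delta> \<longrightarrow>
        (\<forall>x\<in>S y. dist x xbar < \<epsilon> \<longrightarrow> \<tau> * infdist x (S ybar) \<le> (dY y ybar) powr q))"

definition fbar :: "'z set \<Rightarrow> ('a::real_inner \<Rightarrow> real) \<Rightarrow> ('z \<Rightarrow> 'a \<Rightarrow> real)
    \<Rightarrow> 'a \<Rightarrow> ('z \<Rightarrow> real) \<Rightarrow> 'a \<Rightarrow> 'a \<Rightarrow> real" where
  "fbar T f g c b xbar x = Sup (insert (f x - f xbar + inner c (x - xbar))
                                  ((\<lambda>t. g t x - b t) ` T))"

definition subdiff :: "('a::real_inner \<Rightarrow> real) \<Rightarrow> 'a \<Rightarrow> 'a set" where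
  "subdiff h x = {v. \<forall>y. h y \<ge> h x + inner v (y - x)}"

end

theory Submission
  imports Defs
begin

text \<open>
  Write h for fbar and ybar for (f xbar + <cbar, xbar>, bbar). Then h is convex, nonnegative
  and zero at xbar, its zero set is L(ybar), and h x \<le> d(y, ybar) whenever x \<in> L(y), with
  equality for the shifted parameter y = ybar + h x (1, 1). Hence q-order calmness of L is the
  same as the Hoelder error bound \<tau> d(x, [h \<le> 0]) \<le> h(x)^q near xbar. For convex h the error
  bound yields the slope condition through the subgradient inequality
  h x \<le> |v| d(x, [h \<le> 0]). Conversely, minimizing h + \<lambda> |. - w| for a suitable \<lambda> halves the
  value of h within distance O(h(w)^q) of w, because a minimizer with a larger value would
  carry a subgradient shorter than the slope condition allows; iterating, the step lengths form
  a geometric series.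
\<close>

section \<open>Subgradients of convex functions\<close>

lemma convex_strict_epigraph:
  assumes "convex_on UNIV h"
  shows "convex {p. h (fst p) < snd p}"
  unfolding convex_def
proof clarify
  fix z1 t1 z2 t2 and u v :: real
  assume lt: "h (fst (z1, t1)) < snd (z1, t1)" "h (fst (z2, t2)) < snd (z2, t2)"
    and uv: "0 \<le> u" "0 \<le> v" "u + v = 1"
  have "h (u *\<^sub>R z1 + v *\<^sub>R z2) \<le> u * h z1 + v * h z2"
    using assms uv unfolding convex_on_def by auto
  also have "\<dots> < u * t1 + v * t2"
    using lt uv by (cases "u = 0") (auto intro!: add_less_le_mono mult_strict_left_mono mult_left_mono)
  finally show "h (fst (u *\<^sub>R (z1, t1) + v *\<^sub>R (z2, t2))) < snd (u *\<^sub>R (z1, t1) + v *\<^sub>R (z2, t2))"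
    by simp
qed

lemma convex_hypograph:
  assumes "concave_on UNIV k"
  shows "convex {p. snd p \<le> k (fst p)}"
  unfolding convex_def
proof clarify
  fix z1 t1 z2 t2 and u v :: real
  assume le: "snd (z1, t1) \<le> k (fst (z1, t1))" "snd (z2, t2) \<le> k (fst (z2, t2))"
    and uv: "0 \<le> u" "0 \<le> v" "u + v = 1"
  have "u * t1 + v * t2 \<le> u * k z1 + v * k z2"
    using le uv by (auto intro!: add_mono mult_left_mono)
  also have "\<dots> \<le> k (u *\<^sub>R z1 + v *\<^sub>R z2)"
    using assms uv unfolding concave_on_iff by auto
  finally show "snd (u *\<^sub>R (z1, t1) + v *\<^sub>R (z2, t2)) \<le> k (fst (u *\<^sub>R (z1, t1) + v *\<^sub>R (z2, t2)))"
    by simp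
qed

lemma subgradient_supporting_convex_set:
  fixes h :: "'a::euclidean_space \<Rightarrow> real"
  assumes conv: "convex_on UNIV h" and "convex B" and yB: "(y, h y) \<in> B"
    and below: "\<And>z t. (z, t) \<in> B \<Longrightarrow> t \<le> h z"
  shows "\<exists>v\<in>subdiff h y. \<forall>(z, t)\<in>B. t \<le> h y + inner v (z - y)"
proof -
  define A where "A = {p. h (fst p) < snd p}"
  have "(y, h y + 1) \<in> A" unfolding A_def by simp
  moreover have "B \<inter> A = {}" using below unfolding A_def by force
  ultimately obtain a b where "a \<noteq> 0" and aB: "\<forall>p\<in>B. inner a p \<le> b" and aA: "\<forall>p\<in>A. b \<le> inner a p"
    using separating_hyperplane_sets[OF \<open>convex B\<close> convex_strict_epigraph[OF conv]] yB
    unfolding A_def by blast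
  obtain w \<beta> where a: "a = (w, \<beta>)" by (cases a)
  have above: "b \<le> inner w z + \<beta> * t" if "h z < t" for z t
    using aA that unfolding A_def a by auto
  have under: "inner w z + \<beta> * t \<le> b" if "(z, t) \<in> B" for z t
    using aB that unfolding a by auto
  have hy: "inner w y + \<beta> * h y \<le> b" using under[OF yB] .
  \<comment> \<open>The hyperplane is not vertical, since \<open>A\<close> lies above every point of the space.\<close>
  have "\<beta> \<noteq> 0"
  proof
    assume "\<beta> = 0"
    then have "inner w w \<le> 0"
      using above[of "y - w" "h (y - w) + 1"] hy by (simp add: inner_diff_right)
    moreover have "w \<noteq> 0" using \<open>a \<noteq> 0\<close> \<open>\<beta> = 0\<close> a by (simp add: zero_prod_def)
    ultimately show False by (metis inner_gt_zero_iff not_le)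
  qed
  moreover have "\<beta> \<ge> 0" using above[of y "h y + 1"] hy by (simp add: algebra_simps)
  ultimately have "\<beta> > 0" by simp
  have graph: "b \<le> inner w z + \<beta> * h z" for z
  proof (rule field_le_epsilon)
    fix e :: real assume "0 < e"
    then have "b \<le> inner w z + \<beta> * (h z + e / \<beta>)" using above \<open>\<beta> > 0\<close> by simp
    then show "b \<le> inner w z + \<beta> * h z + e" using \<open>\<beta> > 0\<close> by (simp add: algebra_simps)
  qed
  define v where "v = - (1 / \<beta>) *\<^sub>R w"
  have "\<beta> * inner v u = - inner w u" for u using \<open>\<beta> > 0\<close> unfolding v_def by simp
  then have scaled: "\<beta> * (h y + inner v (z - y)) = \<beta> * h y + inner w y - inner w z" for z
    by (simp add: algebra_simps inner_diff_right)
  have "h y + inner v (z - y) \<le> h z" for z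
    by (rule mult_left_le_imp_le[OF _ \<open>\<beta> > 0\<close>]) (use graph[of z] hy scaled[of z] in linarith)
  then have "v \<in> subdiff h y" unfolding subdiff_def by (simp add: add.commute)
  moreover have "t \<le> h y + inner v (z - y)" if "(z, t) \<in> B" for z t
    by (rule mult_left_le_imp_le[OF _ \<open>\<beta> > 0\<close>]) (use under[OF that] graph[of y] scaled[of z] in linarith)
  ultimately show ?thesis by blast
qed

lemma subdiff_nonempty:
  fixes h :: "'a::euclidean_space \<Rightarrow> real"
  assumes "convex_on UNIV h"
  shows "subdiff h y \<noteq> {}"
  using subgradient_supporting_convex_set[OF assms convex_singleton] by blast

lemma subgradient_norm_le:
  fixes h :: "'a::euclidean_space \<Rightarrow> real"
  assumes conv: "convex_on UNIV h" and "0 \<le> lam"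
    and sharp: "\<And>z. h y - lam * norm (z - y) \<le> h z"
  shows "\<exists>v\<in>subdiff h y. norm v \<le> lam"
proof -
  have concave: "concave_on UNIV (\<lambda>z. h y - lam * dist y z)"
    by (intro concave_on_diff concave_on_const[THEN iffD2] convex_on_cmul convex_on_dist convex_UNIV
        \<open>0 \<le> lam\<close>)
  have "t \<le> h z" if "(z, t) \<in> {p. snd p \<le> h y - lam * dist y (fst p)}" for z t
    using that sharp[of z] by (simp add: dist_norm norm_minus_commute)
  then obtain v where v: "v \<in> subdiff h y"
    and supp: "\<forall>(z, t)\<in>{p. snd p \<le> h y - lam * dist y (fst p)}. t \<le> h y + inner v (z - y)"
    using subgradient_supporting_convex_set[OF conv convex_hypograph[OF concave], where y = y] by auto
  have "(y - v, h y - lam * norm v) \<in> {p. snd p \<le> h y - lam * dist y (fst p)}" by (simp add: dist_norm)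
  then have "h y - lam * norm v \<le> h y - inner v v" using bspec[OF supp] by (fastforce simp: inner_diff_right)
  then have "norm v * norm v \<le> lam * norm v" by (simp add: dot_square_norm power2_eq_square)
  then have "norm v \<le> lam"
    using \<open>0 \<le> lam\<close> mult_le_cancel_right_pos[of "norm v" "norm v" lam] by (cases "v = 0") simp_all
  with v show ?thesis by blast
qed

lemma convex_on_Sup_insert:
  assumes "convex_on S f0" and "\<And>i. i \<in> I \<Longrightarrow> convex_on S (F i)"
    and bdd: "\<And>x. x \<in> S \<Longrightarrow> bdd_above ((\<lambda>i. F i x) ` I)"
  shows "convex_on S (\<lambda>x. Sup (insert (f0 x) ((\<lambda>i. F i x) ` I)))"
  unfolding convex_on_def
proof (intro conjI ballI allI impI)
  show "convex S" using assms(1) by (rule convex_on_imp_convex)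
  let ?sup = "\<lambda>x. Sup (insert (f0 x) ((\<lambda>i. F i x) ` I))"
  fix x y and u v :: real
  assume "x \<in> S" "y \<in> S" and uv: "0 \<le> u" "0 \<le> v" "u + v = 1"
  have le_sup: "f0 z \<le> ?sup z" "i \<in> I \<Longrightarrow> F i z \<le> ?sup z" if "z \<in> S" for z i
    using bdd[OF that] by (auto intro: cSup_upper)
  have comb: "u * a + v * b \<le> u * ?sup x + v * ?sup y" if "a \<le> ?sup x" "b \<le> ?sup y" for a b
    using that uv by (intro add_mono mult_left_mono)
  have "f0 (u *\<^sub>R x + v *\<^sub>R y) \<le> u * f0 x + v * f0 y"
    using assms(1) \<open>x \<in> S\<close> \<open>y \<in> S\<close> uv unfolding convex_on_def by blast
  also have "\<dots> \<le> u * ?sup x + v * ?sup y" using le_sup(1) \<open>x \<in> S\<close> \<open>y \<in> S\<close> by (intro comb)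
  finally have "f0 (u *\<^sub>R x + v *\<^sub>R y) \<le> u * ?sup x + v * ?sup y" .
  moreover have "F i (u *\<^sub>R x + v *\<^sub>R y) \<le> u * ?sup x + v * ?sup y" if "i \<in> I" for i
  proof -
    have "F i (u *\<^sub>R x + v *\<^sub>R y) \<le> u * F i x + v * F i y"
      using assms(2)[OF that] \<open>x \<in> S\<close> \<open>y \<in> S\<close> uv unfolding convex_on_def by blast
    also have "\<dots> \<le> u * ?sup x + v * ?sup y" using le_sup(2) that \<open>x \<in> S\<close> \<open>y \<in> S\<close> by (intro comb)
    finally show ?thesis .
  qed
  ultimately show "?sup (u *\<^sub>R x + v *\<^sub>R y) \<le> u * ?sup x + v * ?sup y"
    by (intro cSup_least) auto
qed

section \<open>Error bounds and subdifferential slopes\<close>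

definition q_order_error_bound :: "('a::metric_space \<Rightarrow> real) \<Rightarrow> 'a \<Rightarrow> real \<Rightarrow> bool" where
  "q_order_error_bound h xbar q \<longleftrightarrow>
     (\<exists>\<tau>>0. \<exists>\<epsilon>>0. \<forall>x. dist x xbar < \<epsilon> \<longrightarrow> 0 < h x \<longrightarrow> \<tau> * infdist x {x. h x \<le> 0} \<le> h x powr q)"

lemma subgradient_value_le_norm_mult_infdist:
  fixes h :: "'a::real_inner \<Rightarrow> real"
  assumes v: "v \<in> subdiff h x" and ne: "{z. h z \<le> 0} \<noteq> {}"
  shows "h x \<le> norm v * infdist x {z. h z \<le> 0}"
proof -
  have bound: "h x \<le> norm v * dist x z" if "h z \<le> 0" for z
  proof -
    have "h x \<le> h z - inner v (z - x)" using v unfolding subdiff_def by (auto simp: algebra_simps)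
    also have "\<dots> \<le> norm v * norm (z - x)"
      using that norm_cauchy_schwarz[of "- v" "z - x"] by simp
    finally show ?thesis by (simp add: dist_norm norm_minus_commute)
  qed
  show ?thesis
  proof (cases "v = 0")
    case True
    with ne bound show ?thesis by auto
  next
    case False
    then have "h x / norm v \<le> infdist x {z. h z \<le> 0}"
      unfolding infdist_notempty[OF ne] using bound
      by (intro cINF_greatest ne) (simp add: pos_divide_le_eq mult.commute)
    with False show ?thesis by (simp add: pos_divide_le_eq mult.commute)
  qed
qed

lemma slope_liminf_pos_if_error_bound:
  fixes h :: "'a::euclidean_space \<Rightarrow> real"
  assumes conv: "convex_on UNIV h" and "h xbar \<le> 0" and "q_order_error_bound h xbar q"
  shows "Liminf (at xbar within {x. h x > 0})
           (\<lambda>x. ereal (h x powr (q - 1) * infdist 0 (subdiff h x))) > 0"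
proof -
  obtain \<tau> \<epsilon> where "\<tau> > 0" "\<epsilon> > 0" and EB:
    "\<And>x. dist x xbar < \<epsilon> \<Longrightarrow> 0 < h x \<Longrightarrow> \<tau> * infdist x {x. h x \<le> 0} \<le> h x powr q"
    using assms(3) unfolding q_order_error_bound_def by blast
  have ne: "{x. h x \<le> 0} \<noteq> {}" using \<open>h xbar \<le> 0\<close> by blast
  have "\<tau> \<le> h x powr (q - 1) * infdist 0 (subdiff h x)" if x: "dist x xbar < \<epsilon>" "0 < h x" for x
  proof -
    have "\<tau> * h x powr (1 - q) \<le> norm v" if "v \<in> subdiff h x" for v
    proof -
      have "\<tau> * h x \<le> norm v * (\<tau> * infdist x {x. h x \<le> 0})"
        using subgradient_value_le_norm_mult_infdist[OF that ne] \<open>\<tau> > 0\<close>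
        by (simp add: mult.left_commute)
      also have "\<dots> \<le> norm v * h x powr q" using EB[OF x] by (simp add: mult_left_mono)
      finally show ?thesis using x(2) by (simp add: powr_diff pos_divide_le_eq mult.commute)
    qed
    then have "\<tau> * h x powr (1 - q) \<le> infdist 0 (subdiff h x)"
      unfolding infdist_notempty[OF subdiff_nonempty[OF conv]]
      by (intro cINF_greatest subdiff_nonempty[OF conv]) simp
    then have "h x powr (q - 1) * (\<tau> * h x powr (1 - q)) \<le> h x powr (q - 1) * infdist 0 (subdiff h x)"
      by (simp add: mult_left_mono)
    then show ?thesis using x(2) by (simp add: mult.left_commute flip: powr_add)
  qed
  then have "\<forall>\<^sub>F x in at xbar within {x. h x > 0}.
      ereal \<tau> \<le> ereal (h x powr (q - 1) * infdist 0 (subdiff h x))"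
    unfolding eventually_at using \<open>\<epsilon> > 0\<close> by auto
  then have "ereal \<tau> \<le> Liminf (at xbar within {x. h x > 0})
                         (\<lambda>x. ereal (h x powr (q - 1) * infdist 0 (subdiff h x)))"
    by (rule Liminf_bounded)
  then show ?thesis using \<open>\<tau> > 0\<close> by (meson ereal_less(2) order_less_le_trans)
qed

lemma slope_bound_if_slope_liminf_pos:
  fixes h :: "'a::real_inner \<Rightarrow> real"
  assumes "Liminf (at xbar within {x. h x > 0})
             (\<lambda>x. ereal (h x powr (q - 1) * infdist 0 (subdiff h x))) > 0"
    and "h xbar \<le> 0"
  shows "\<exists>m>0. \<exists>\<delta>>0. \<forall>x\<in>ball xbar \<delta>. 0 < h x \<longrightarrow>
           (\<forall>v\<in>subdiff h x. m * h x powr (1 - q) < norm v)"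
proof -
  obtain m where "0 < ereal m"
    and "ereal m < Liminf (at xbar within {x. h x > 0})
                      (\<lambda>x. ereal (h x powr (q - 1) * infdist 0 (subdiff h x)))"
    using ereal_dense2[OF assms(1)] by blast
  then have "m > 0"
    and "\<forall>\<^sub>F x in at xbar within {x. h x > 0}. m < h x powr (q - 1) * infdist 0 (subdiff h x)"
    using less_LiminfD by fastforce+
  then obtain \<delta> where "\<delta> > 0" and near: "\<And>x. 0 < h x \<Longrightarrow> x \<noteq> xbar \<Longrightarrow> dist x xbar < \<delta> \<Longrightarrow>
      m < h x powr (q - 1) * infdist 0 (subdiff h x)"
    unfolding eventually_at by auto
  have "m * h x powr (1 - q) < norm v"
    if "x \<in> ball xbar \<delta>" "0 < h x" "v \<in> subdiff h x" for x v
  proof -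
    have "x \<noteq> xbar" using that(2) \<open>h xbar \<le> 0\<close> by auto
    then have "m < h x powr (q - 1) * infdist 0 (subdiff h x)"
      using near that(1,2) by (simp add: dist_commute)
    also have "\<dots> \<le> h x powr (q - 1) * norm v"
      using infdist_le[OF that(3), of 0] by (simp add: mult_left_mono)
    finally have "h x powr (1 - q) * m < h x powr (1 - q) * (h x powr (q - 1) * norm v)"
      using that(2) by simp
    moreover have "h x powr (1 - q) * h x powr (q - 1) = 1" using that(2) by (simp flip: powr_add)
    ultimately show ?thesis by (simp add: algebra_simps)
  qed
  with \<open>m > 0\<close> \<open>\<delta> > 0\<close> show ?thesis by blast
qed

lemma penalized_minimizer_exists:
  fixes h :: "'a::{heine_borel, real_normed_vector} \<Rightarrow> real"
  assumes cont: "continuous_on UNIV h" and nonneg: "\<And>x. 0 \<le> h x" and "0 < lam"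
  shows "\<exists>y. dist y w \<le> h w / lam \<and> (\<forall>z. h y + lam * dist y w \<le> h z + lam * dist z w)"
proof -
  define R where "R = h w / lam"
  have "0 \<le> R" using nonneg \<open>0 < lam\<close> unfolding R_def by simp
  have "continuous_on (cball w R) (\<lambda>z. h z + lam * dist z w)"
    by (intro continuous_intros continuous_on_subset[OF cont]) auto
  moreover have "cball w R \<noteq> {}" using \<open>0 \<le> R\<close> by simp
  ultimately obtain y where y: "y \<in> cball w R"
    and min: "\<And>z. z \<in> cball w R \<Longrightarrow> h y + lam * dist y w \<le> h z + lam * dist z w"
    using continuous_attains_inf[OF compact_cball] by blast
  have "h y + lam * dist y w \<le> h z + lam * dist z w" for z
  proof (cases "z \<in> cball w R")
    case True
    then show ?thesis by (rule min)
  next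
    case False
    then have "h w / lam < dist z w" unfolding R_def by (simp add: dist_commute)
    then have "h w < lam * dist z w" using \<open>0 < lam\<close> by (simp add: pos_divide_less_eq mult.commute)
    moreover have "h y + lam * dist y w \<le> h w" using min[of w] \<open>0 \<le> R\<close> by simp
    ultimately show ?thesis using nonneg[of z] by linarith
  qed
  moreover have "dist y w \<le> h w / lam" using y unfolding R_def by (simp add: dist_commute)
  ultimately show ?thesis by blast
qed

lemma powr_divide_power:
  fixes s b q :: real
  assumes "0 \<le> s" and "0 < b"
  shows "(s / b ^ k) powr q = s powr q / (b powr q) ^ k"
proof -
  have "(b ^ k) powr q = (b powr q) ^ k"
    using assms(2) by (simp add: powr_realpow[symmetric] powr_powr_swap[of b "real k"])
  then show ?thesis using assms by (simp add: powr_divide)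
qed

lemma descent_step:
  fixes h :: "'a::euclidean_space \<Rightarrow> real"
  assumes conv: "convex_on UNIV h" and nonneg: "\<And>x. 0 \<le> h x" and "q \<le> 1" "0 < m"
    and slope: "\<And>x v. x \<in> U \<Longrightarrow> 0 < h x \<Longrightarrow> v \<in> subdiff h x \<Longrightarrow> m * h x powr (1 - q) < norm v"
    and "0 < r" "h w \<le> 2 * r" and U: "cball w (4 * r powr q / m) \<subseteq> U"
  shows "\<exists>y\<in>cball w (4 * r powr q / m). h y \<le> r"
proof -
  \<comment> \<open>At a minimizer \<open>y\<close> of \<open>\<lambda>z. h z + lam * dist z w\<close> some subgradient has norm
    \<open>\<le> lam\<close>, which the slope bound forbids as long as \<open>h y > r\<close>.\<close>
  define lam where "lam = m / 2 * r powr (1 - q)"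
  have "0 < lam" using \<open>0 < m\<close> \<open>0 < r\<close> unfolding lam_def by simp
  obtain y where dy: "dist y w \<le> h w / lam"
    and min: "\<And>z. h y + lam * dist y w \<le> h z + lam * dist z w"
    using penalized_minimizer_exists[OF convex_on_continuous[OF open_UNIV conv] nonneg \<open>0 < lam\<close>]
    by blast
  have "h w / lam \<le> 2 * r / lam" using \<open>h w \<le> 2 * r\<close> \<open>0 < lam\<close> by (simp add: divide_right_mono)
  also have "\<dots> = 4 * r powr q / m"
    using \<open>0 < m\<close> \<open>0 < r\<close> unfolding lam_def by (simp add: powr_diff field_simps)
  finally have y: "y \<in> cball w (4 * r powr q / m)" using dy by (simp add: dist_commute)
  have "h y \<le> r"
  proof (rule ccontr)
    assume "\<not> h y \<le> r"
    have "h y - lam * norm (z - y) \<le> h z" for z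
    proof -
      have "lam * dist z w \<le> lam * dist z y + lam * dist y w"
        using mult_left_mono[OF dist_triangle[of z w y]] \<open>0 < lam\<close> by (simp add: distrib_left)
      then show ?thesis using min[of z] unfolding dist_norm by linarith
    qed
    then obtain v where "v \<in> subdiff h y" "norm v \<le> lam"
      using subgradient_norm_le[OF conv less_imp_le[OF \<open>0 < lam\<close>]] by blast
    then have "m * h y powr (1 - q) < lam"
      using slope[of y v] U y \<open>\<not> h y \<le> r\<close> \<open>0 < r\<close> by auto
    moreover have "m * r powr (1 - q) \<le> m * h y powr (1 - q)"
      using powr_mono2[of "1 - q" r "h y"] \<open>q \<le> 1\<close> \<open>0 < r\<close> \<open>\<not> h y \<le> r\<close> \<open>0 < m\<close> by simp
    moreover have "0 < m * r powr (1 - q)" using \<open>0 < m\<close> \<open>0 < r\<close> by simp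
    ultimately show False unfolding lam_def by linarith
  qed
  with y show ?thesis by blast
qed

lemma descent_iterate:
  fixes h :: "'a::euclidean_space \<Rightarrow> real" and q :: real
  defines "\<rho> \<equiv> 1 / 2 powr q"
  assumes conv: "convex_on UNIV h" and nonneg: "\<And>x. 0 \<le> h x" and "0 < q" "q \<le> 1" "0 < m"
    and slope: "\<And>x v. x \<in> U \<Longrightarrow> 0 < h x \<Longrightarrow> v \<in> subdiff h x \<Longrightarrow> m * h x powr (1 - q) < norm v"
    and "0 < h x" and U: "cball x (4 / m * \<rho> / (1 - \<rho>) * h x powr q) \<subseteq> U"
  shows "\<exists>z\<in>cball x (4 / m * \<rho> / (1 - \<rho>) * h x powr q * (1 - \<rho> ^ k)). h z \<le> h x / 2 ^ k"
proof (induction k)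
  case 0
  show ?case by (intro bexI[of _ x]) simp_all
next
  case (Suc k)
  define A where "A = 4 / m * \<rho> / (1 - \<rho>) * h x powr q"
  have "0 < \<rho>" "\<rho> < 1" using \<open>0 < q\<close> unfolding \<rho>_def by simp_all
  then have "0 \<le> A" using \<open>0 < m\<close> unfolding A_def by simp
  obtain z where z: "dist x z \<le> A * (1 - \<rho> ^ k)" "h z \<le> h x / 2 ^ k"
    using Suc.IH unfolding A_def by auto
  define r where "r = h x / 2 ^ Suc k"
  have "0 < r" "h z \<le> 2 * r" using z(2) \<open>0 < h x\<close> unfolding r_def by simp_all
  have "r powr q = h x powr q / (2 powr q) ^ Suc k"
    unfolding r_def by (rule powr_divide_power[OF nonneg]) simp
  also have "\<dots> = h x powr q * \<rho> ^ Suc k" by (simp add: \<rho>_def power_one_over)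
  finally have rq: "r powr q = h x powr q * \<rho> ^ Suc k" .
  have "A * (1 - \<rho> ^ Suc k) - A * (1 - \<rho> ^ k) = A * (1 - \<rho>) * \<rho> ^ k" by (simp add: algebra_simps)
  also have "\<dots> = 4 / m * \<rho> * h x powr q * \<rho> ^ k" using \<open>\<rho> < 1\<close> unfolding A_def by simp
  also have "\<dots> = 4 * r powr q / m" unfolding rq by simp
  finally have step: "4 * r powr q / m = A * (1 - \<rho> ^ Suc k) - A * (1 - \<rho> ^ k)" ..
  have sub: "cball z (4 * r powr q / m) \<subseteq> cball x (A * (1 - \<rho> ^ Suc k))"
    using z(1) step by (simp add: cball_subset_cball_iff dist_commute)
  also have "\<dots> \<subseteq> cball x A"
    using \<open>0 \<le> A\<close> \<open>0 < \<rho>\<close> by (intro subset_cball mult_left_le) simp_all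
  also have "\<dots> \<subseteq> U" using U unfolding A_def .
  finally obtain y where "y \<in> cball z (4 * r powr q / m)" "h y \<le> r"
    using descent_step[OF conv nonneg \<open>q \<le> 1\<close> \<open>0 < m\<close> slope \<open>0 < r\<close> \<open>h z \<le> 2 * r\<close>] by blast
  with sub show ?case unfolding A_def r_def by auto
qed

lemma infdist_sublevel_le_if_slope_bound:
  fixes h :: "'a::euclidean_space \<Rightarrow> real" and q :: real
  defines "\<rho> \<equiv> 1 / 2 powr q"
  assumes conv: "convex_on UNIV h" and nonneg: "\<And>x. 0 \<le> h x" and "0 < q" "q \<le> 1" "0 < m"
    and slope: "\<And>x v. x \<in> U \<Longrightarrow> 0 < h x \<Longrightarrow> v \<in> subdiff h x \<Longrightarrow> m * h x powr (1 - q) < norm v"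
    and "0 < h x" and U: "cball x (4 / m * \<rho> / (1 - \<rho>) * h x powr q) \<subseteq> U"
  shows "infdist x {z. h z \<le> 0} \<le> 4 / m * \<rho> / (1 - \<rho>) * h x powr q"
proof -
  define A where "A = 4 / m * \<rho> / (1 - \<rho>) * h x powr q"
  have "0 < \<rho>" "\<rho> < 1" using \<open>0 < q\<close> unfolding \<rho>_def by simp_all
  then have "0 \<le> A" using \<open>0 < m\<close> unfolding A_def by simp
  have "continuous_on (cball x A) h"
    using convex_on_continuous[OF open_UNIV conv] by (rule continuous_on_subset) simp
  moreover have "cball x A \<noteq> {}" using \<open>0 \<le> A\<close> by simp
  ultimately obtain y where y: "y \<in> cball x A" and min: "\<And>z. z \<in> cball x A \<Longrightarrow> h y \<le> h z"
    using continuous_attains_inf[OF compact_cball] by blast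
  have "h y \<le> h x / 2 ^ k" for k
  proof -
    obtain z where "z \<in> cball x (A * (1 - \<rho> ^ k))" "h z \<le> h x / 2 ^ k"
      using descent_iterate[OF conv nonneg \<open>0 < q\<close> \<open>q \<le> 1\<close> \<open>0 < m\<close> slope \<open>0 < h x\<close> U[unfolded \<rho>_def]]
      unfolding A_def \<rho>_def by blast
    moreover have "cball x (A * (1 - \<rho> ^ k)) \<subseteq> cball x A"
      using \<open>0 \<le> A\<close> \<open>0 < \<rho>\<close> by (intro subset_cball mult_left_le) simp_all
    ultimately show ?thesis using min by force
  qed
  then have "h y \<le> 0"
    by (intro LIMSEQ_le_const[OF LIMSEQ_divide_realpow_zero[of 2 "h x"]]) auto
  then have "infdist x {z. h z \<le> 0} \<le> dist x y" by (intro infdist_le) simp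
  with y show ?thesis unfolding A_def by simp
qed

lemma error_bound_if_slope_liminf_pos:
  fixes h :: "'a::euclidean_space \<Rightarrow> real"
  assumes conv: "convex_on UNIV h" and nonneg: "\<And>x. 0 \<le> h x" and "h xbar = 0"
    and "0 < q" "q \<le> 1"
    and "Liminf (at xbar within {x. h x > 0})
           (\<lambda>x. ereal (h x powr (q - 1) * infdist 0 (subdiff h x))) > 0"
  shows "q_order_error_bound h xbar q"
proof -
  obtain m \<delta> where "0 < m" "0 < \<delta>"
    and slope: "\<And>x v. x \<in> ball xbar \<delta> \<Longrightarrow> 0 < h x \<Longrightarrow> v \<in> subdiff h x \<Longrightarrow> m * h x powr (1 - q) < norm v"
    using slope_bound_if_slope_liminf_pos[OF assms(6)] \<open>h xbar = 0\<close> by force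
  define \<rho> where "\<rho> = 1 / 2 powr q"
  define C where "C = 4 / m * \<rho> / (1 - \<rho>)"
  have "0 < C" using \<open>0 < m\<close> \<open>0 < q\<close> unfolding C_def \<rho>_def by simp
  have "isCont h xbar"
    using convex_on_continuous[OF open_UNIV conv] by (simp add: continuous_on_eq_continuous_at)
  then have "(h \<longlongrightarrow> 0) (at xbar)" using \<open>h xbar = 0\<close> by (metis isContD)
  then have "((\<lambda>x. C * h x powr q) \<longlongrightarrow> 0) (at xbar)"
    using \<open>0 < q\<close> nonneg by (intro tendsto_mult_right_zero tendsto_zero_powrI) auto
  then have "\<forall>\<^sub>F x in at xbar. C * h x powr q < \<delta> / 2"
    by (rule order_tendstoD(2)) (simp add: \<open>0 < \<delta>\<close>)
  then obtain \<epsilon> where "0 < \<epsilon>" and small: "\<And>x. x \<noteq> xbar \<Longrightarrow> dist x xbar < \<epsilon> \<Longrightarrow> C * h x powr q < \<delta> / 2"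
    unfolding eventually_at by auto
  have "1 / C * infdist x {x. h x \<le> 0} \<le> h x powr q"
    if "dist x xbar < min \<epsilon> (\<delta> / 2)" "0 < h x" for x
  proof -
    have "x \<noteq> xbar" using \<open>0 < h x\<close> \<open>h xbar = 0\<close> by auto
    then have "C * h x powr q < \<delta> / 2" using small that(1) by simp
    then have "cball x (C * h x powr q) \<subseteq> ball xbar \<delta>"
      using that(1) by (simp add: cball_subset_ball_iff dist_commute)
    then have "infdist x {x. h x \<le> 0} \<le> C * h x powr q"
      using infdist_sublevel_le_if_slope_bound[OF conv nonneg \<open>0 < q\<close> \<open>q \<le> 1\<close> \<open>0 < m\<close> slope \<open>0 < h x\<close>]
      unfolding C_def \<rho>_def by blast
    then show ?thesis using \<open>0 < C\<close> by (simp add: divide_simps mult.commute)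
  qed
  moreover have "0 < 1 / C" "0 < min \<epsilon> (\<delta> / 2)" using \<open>0 < C\<close> \<open>0 < \<epsilon>\<close> \<open>0 < \<delta>\<close> by simp_all
  ultimately show ?thesis unfolding q_order_error_bound_def by blast
qed

lemma convex_error_bound_iff_slope_liminf_pos:
  fixes h :: "'a::euclidean_space \<Rightarrow> real"
  assumes "convex_on UNIV h" and "\<And>x. 0 \<le> h x" and "h xbar = 0" and "0 < q" "q \<le> 1"
  shows "q_order_error_bound h xbar q \<longleftrightarrow>
    Liminf (at xbar within {x. h x > 0}) (\<lambda>x. ereal (h x powr (q - 1) * infdist 0 (subdiff h x))) > 0"
  using slope_liminf_pos_if_error_bound error_bound_if_slope_liminf_pos assms by fastforce

section \<open>Calmness of the level-set map\<close>

lemma q_order_calm_iff_error_bound: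
  fixes \<phi> :: "'x::metric_space \<Rightarrow> real"
  assumes "0 \<le> q" and "isCont \<phi> xbar" and "\<phi> xbar = 0"
    and sublevel: "L ybar = {x. \<phi> x \<le> 0}"
    and upper: "\<And>y x. y \<in> Y \<Longrightarrow> x \<in> L y \<Longrightarrow> \<phi> x \<le> dY y ybar"
    and attained: "\<And>x. 0 < \<phi> x \<Longrightarrow> \<exists>y\<in>Y. x \<in> L y \<and> dY y ybar = \<phi> x"
  shows "q_order_calm Y dY L ybar xbar q \<longleftrightarrow> q_order_error_bound \<phi> xbar q"
proof
  assume "q_order_calm Y dY L ybar xbar q"
  then obtain \<tau> \<epsilon> \<delta> where "0 < \<tau>" "0 < \<epsilon>" "0 < \<delta>" and calm:
    "\<And>y x. y \<in> Y \<Longrightarrow> dY y ybar < \<delta> \<Longrightarrow> x \<in> L y \<Longrightarrow> dist x xbar < \<epsilon> \<Longrightarrow>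
       \<tau> * infdist x (L ybar) \<le> dY y ybar powr q"
    unfolding q_order_calm_def by blast
  obtain \<epsilon>' where "0 < \<epsilon>'" and small: "\<And>x. dist x xbar < \<epsilon>' \<Longrightarrow> dist (\<phi> x) (\<phi> xbar) < \<delta>"
    using \<open>isCont \<phi> xbar\<close> \<open>0 < \<delta>\<close> unfolding continuous_at_eps_delta by blast
  have "\<tau> * infdist x {x. \<phi> x \<le> 0} \<le> \<phi> x powr q"
    if x: "dist x xbar < min \<epsilon> \<epsilon>'" "0 < \<phi> x" for x
  proof -
    obtain y where "y \<in> Y" "x \<in> L y" "dY y ybar = \<phi> x" using attained[OF x(2)] by blast
    then show ?thesis
      using calm[of y x] small[of x] x \<open>\<phi> xbar = 0\<close> sublevel by (simp add: dist_real_def)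
  qed
  moreover have "0 < min \<epsilon> \<epsilon>'" using \<open>0 < \<epsilon>\<close> \<open>0 < \<epsilon>'\<close> by simp
  ultimately show "q_order_error_bound \<phi> xbar q"
    unfolding q_order_error_bound_def using \<open>0 < \<tau>\<close> by blast
next
  assume "q_order_error_bound \<phi> xbar q"
  then obtain \<tau> \<epsilon> where "0 < \<tau>" "0 < \<epsilon>" and EB:
    "\<And>x. dist x xbar < \<epsilon> \<Longrightarrow> 0 < \<phi> x \<Longrightarrow> \<tau> * infdist x {x. \<phi> x \<le> 0} \<le> \<phi> x powr q"
    unfolding q_order_error_bound_def by blast
  have "\<tau> * infdist x (L ybar) \<le> dY y ybar powr q"
    if "y \<in> Y" "x \<in> L y" "dist x xbar < \<epsilon>" for y x
  proof (cases "0 < \<phi> x")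
    case True
    then have "\<tau> * infdist x (L ybar) \<le> \<phi> x powr q" using EB that(3) sublevel by simp
    also have "\<dots> \<le> dY y ybar powr q"
      using upper[OF that(1,2)] True \<open>0 \<le> q\<close> by (simp add: powr_mono2)
    finally show ?thesis .
  next
    case False
    then show ?thesis using sublevel by simp
  qed
  then show "q_order_calm Y dY L ybar xbar q"
    unfolding q_order_calm_def using \<open>0 < \<tau>\<close> \<open>0 < \<epsilon>\<close> zero_less_one by blast
qed

lemma abs_le_supnorm:
  assumes "bdd_above ((\<lambda>t. \<bar>u t\<bar>) ` T)" and "t \<in> T"
  shows "\<bar>u t\<bar> \<le> supnorm T u"
  unfolding supnorm_def using assms by (intro cSup_upper) auto

lemma param_dist_shift:
  assumes "0 \<le> s"
  shows "param_dist T (\<alpha> + s, \<lambda>t. b t + s) (\<alpha>, b) = s"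
proof -
  have "supnorm T (\<lambda>t. s) \<le> s" unfolding supnorm_def using assms by (intro cSup_least) auto
  then show ?thesis using assms unfolding param_dist_def by simp
qed

context
  fixes T :: "'z set" and f :: "'a::real_inner \<Rightarrow> real" and g :: "'z \<Rightarrow> 'a \<Rightarrow> real"
    and c :: 'a and b :: "'z \<Rightarrow> real" and xbar :: 'a
  assumes bdd: "\<And>x. bdd_above ((\<lambda>t. g t x - b t) ` T)"
begin

lemma fbar_le_iff:
  "fbar T f g c b xbar x \<le> M \<longleftrightarrow>
     f x - f xbar + inner c (x - xbar) \<le> M \<and> (\<forall>t\<in>T. g t x - b t \<le> M)"
  unfolding fbar_def using bdd by (subst cSup_le_iff) auto

lemma fbar_ge:
  shows "f x - f xbar + inner c (x - xbar) \<le> fbar T f g c b xbar x"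
    and "t \<in> T \<Longrightarrow> g t x - b t \<le> fbar T f g c b xbar x"
  using fbar_le_iff[of x "fbar T f g c b xbar x"] by auto

lemma fbar_nonneg:
  assumes "xbar \<in> optsol T f g c b"
  shows "0 \<le> fbar T f g c b xbar x"
proof (cases "x \<in> feasible T g b")
  case True
  then have "0 \<le> f x - f xbar + inner c (x - xbar)"
    using assms unfolding optsol_def by (auto simp: inner_diff_right)
  then show ?thesis using fbar_ge(1) by (rule order_trans)
next
  case False
  then obtain t where "t \<in> T" "b t < g t x" unfolding feasible_def by auto
  then show ?thesis using fbar_ge(2)[of t x] by linarith
qed

lemma fbar_self:
  assumes "xbar \<in> optsol T f g c b"
  shows "fbar T f g c b xbar xbar = 0"
proof (rule antisym)
  show "fbar T f g c b xbar xbar \<le> 0"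
    using assms unfolding fbar_le_iff optsol_def feasible_def by auto
qed (rule fbar_nonneg[OF assms])

lemma convex_on_fbar:
  assumes "convex_on UNIV f" and "\<And>t. t \<in> T \<Longrightarrow> convex_on UNIV (g t)"
  shows "convex_on UNIV (fbar T f g c b xbar)"
proof -
  have "convex_on UNIV (\<lambda>x. inner c (x - xbar))"
    by (intro convex_onI) (simp_all add: inner_add_right inner_diff_right algebra_simps)
  then have "convex_on UNIV (\<lambda>x. f x - f xbar + inner c (x - xbar))"
    using assms(1) by (intro convex_on_add convex_on_diff concave_on_const[THEN iffD2] convex_UNIV)
  moreover have "convex_on UNIV (\<lambda>x. g t x - b t)" if "t \<in> T" for t
    using assms(2)[OF that] by (simp add: convex_on_diff concave_on_const)
  ultimately show ?thesis
    unfolding fbar_def[abs_def] using bdd by (intro convex_on_Sup_insert) auto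
qed

lemma levelmap_eq_fbar_sublevel:
  "levelmap T f g c (f xbar + inner c xbar, b) = {x. fbar T f g c b xbar x \<le> 0}"
  using fbar_le_iff unfolding levelmap_def by (auto simp: inner_diff_right)

lemma fbar_le_param_dist:
  assumes "bdd_above ((\<lambda>t. \<bar>b' t - b t\<bar>) ` T)" and x: "x \<in> levelmap T f g c (\<alpha>, b')"
  shows "fbar T f g c b xbar x \<le> param_dist T (\<alpha>, b') (f xbar + inner c xbar, b)"
proof -
  have "g t x - b t \<le> supnorm T (\<lambda>t. b' t - b t)" if "t \<in> T" for t
    using x that abs_le_supnorm[OF assms(1) that] unfolding levelmap_def by force
  moreover have "f x - f xbar + inner c (x - xbar) \<le> \<bar>\<alpha> - (f xbar + inner c xbar)\<bar>"
    using x unfolding levelmap_def by (auto simp: inner_diff_right)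
  ultimately show ?thesis unfolding fbar_le_iff param_dist_def by force
qed

lemma mem_levelmap_fbar_shift:
  "x \<in> levelmap T f g c
     (f xbar + inner c xbar + fbar T f g c b xbar x, \<lambda>t. b t + fbar T f g c b xbar x)"
  using fbar_ge(1)[of x] fbar_ge(2)[of _ x] unfolding levelmap_def by (force simp: inner_diff_right)

end

lemma q_order_calm_levelmap_iff_fbar_error_bound:
  fixes T :: "'z::topological_space set" and f :: "'a::real_inner \<Rightarrow> real"
  assumes "0 \<le> q" and "compact T" and "continuous_on T b"
    and bdd: "\<And>x. bdd_above ((\<lambda>t. g t x - b t) ` T)"
    and opt: "xbar \<in> optsol T f g c b" and cont: "isCont (fbar T f g c b xbar) xbar"
  shows "q_order_calm (param_space T) (param_dist T) (levelmap T f g c)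
           (f xbar + inner c xbar, b) xbar q
         \<longleftrightarrow> q_order_error_bound (fbar T f g c b xbar) xbar q"
proof (rule q_order_calm_iff_error_bound[OF \<open>0 \<le> q\<close> cont])
  show "fbar T f g c b xbar xbar = 0" by (rule fbar_self[OF bdd opt])
  show "levelmap T f g c (f xbar + inner c xbar, b) = {x. fbar T f g c b xbar x \<le> 0}"
    by (rule levelmap_eq_fbar_sublevel) (rule bdd)
next
  fix y x assume "y \<in> param_space T" and x: "x \<in> levelmap T f g c y"
  then obtain \<alpha> b' where y: "y = (\<alpha>, b')" and "continuous_on T b'" unfolding param_space_def by auto
  then have "bdd_above ((\<lambda>t. \<bar>b' t - b t\<bar>) ` T)"
    using \<open>compact T\<close> \<open>continuous_on T b\<close>
    by (intro bounded_imp_bdd_above compact_imp_bounded compact_continuous_image continuous_intros)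
  then show "fbar T f g c b xbar x \<le> param_dist T y (f xbar + inner c xbar, b)"
    using x unfolding y by (rule fbar_le_param_dist[OF bdd])
next
  fix x assume "0 < fbar T f g c b xbar x"
  let ?s = "fbar T f g c b xbar x"
  have "(f xbar + inner c xbar + ?s, \<lambda>t. b t + ?s) \<in> param_space T"
    using \<open>continuous_on T b\<close> unfolding param_space_def by (auto intro!: continuous_intros)
  then show "\<exists>y\<in>param_space T. x \<in> levelmap T f g c y \<and> param_dist T y (f xbar + inner c xbar, b) = ?s"
    using mem_levelmap_fbar_shift[OF bdd] param_dist_shift[of ?s] \<open>0 < ?s\<close> by force
qed

theorem proposition4p3:
  fixes T :: "'z::metric_space set"
    and f :: "'a::euclidean_space \<Rightarrow> real"
    and g :: "'z \<Rightarrow> 'a \<Rightarrow> real"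
    and cbar :: 'a and bbar :: "'z \<Rightarrow> real" and xbar :: 'a and q :: real
  assumes "compact T" and "T \<noteq> UNIV"
    and "convex_on UNIV f"
    and "\<And>t. t \<in> T \<Longrightarrow> convex_on UNIV (g t)"
    and "continuous_on (T \<times> UNIV) (\<lambda>(t, x). g t x)"
    and "0 < q" and "q \<le> 1"
    and "continuous_on T bbar"
    and "xbar \<in> optsol T f g cbar bbar"
  shows "q_order_calm (param_space T) (param_dist T) (levelmap T f g cbar)
            (f xbar + inner cbar xbar, bbar) xbar q
         \<longleftrightarrow>
         Liminf (at xbar within {x. fbar T f g cbar bbar xbar x > 0})
           (\<lambda>x. ereal (fbar T f g cbar bbar xbar x powr (q - 1)
                    * infdist 0 (subdiff (fbar T f g cbar bbar xbar) x))) > 0"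
proof -
  let ?h = "fbar T f g cbar bbar xbar"
  have bdd: "bdd_above ((\<lambda>t. g t x - bbar t) ` T)" for x
  proof -
    have "continuous_on T (\<lambda>t. (\<lambda>(t, x). g t x) (t, x))"
      by (rule continuous_on_compose2[OF assms(5)]) (auto intro!: continuous_intros)
    then have "continuous_on T (\<lambda>t. g t x)" by simp
    then show ?thesis
      using assms(1,8)
      by (intro bounded_imp_bdd_above compact_imp_bounded compact_continuous_image continuous_intros)
  qed
  have conv: "convex_on UNIV ?h" using convex_on_fbar[OF bdd assms(3,4)] .
  then have "isCont ?h xbar"
    using convex_on_continuous[OF open_UNIV conv] by (simp add: continuous_on_eq_continuous_at)
  then have "q_order_calm (param_space T) (param_dist T) (levelmap T f g cbar)
               (f xbar + inner cbar xbar, bbar) xbar q \<longleftrightarrow> q_order_error_bound ?h xbar q"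
    using \<open>0 < q\<close> by (intro q_order_calm_levelmap_iff_fbar_error_bound bdd assms(1,8,9)) simp_all
  also have "\<dots> \<longleftrightarrow> Liminf (at xbar within {x. ?h x > 0})
                      (\<lambda>x. ereal (?h x powr (q - 1) * infdist 0 (subdiff ?h x))) > 0"
    using conv fbar_nonneg[OF bdd assms(9)] fbar_self[OF bdd assms(9)] assms(6,7)
    by (rule convex_error_bound_iff_slope_liminf_pos)
  finally show ?thesis .
qed

end
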